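(* Let $K$ be a global function field with full constant field $\mathbb{F}_q$, and let $\phi\in K[X]$ be a polynomial of degree $d$. Let $\mathcal{P}$ and $\mathcal{P}'$ be subsets of $K$ such that: (a) the differences $y-x$, with $(x,y)$ ranging over the pairs of distinct elements of $\mathcal{P}$, are all equal up to multiplication by elements of $\mathbb{F}_q^*$ (i.e. for any two such pairs $(x,y),(x',y')$ there is $u\in\mathbb{F}_q^*$ with $y'-x'=u(y-x)$); (b) $\mathcal{P}'\cup\phi(\mathcal{P}')\subseteq\mathcal{P}$. Then: (i) $\#\mathcal{P}\leqslant q$ (this uses only (a)); (ii) either $\#\mathcal{P}'\leqslant d$, or $\phi$ is conjugate over $K$ to a polynomial with coefficients in $\mathbb{F}_q$.
   Context: A global function field is a finite extension of $\mathbb{F}_p(t)$; its full constant field is the algebraic closure of $\mathbb{F}_p$ in $K$, a finite field $\mathbb{F}_q$. "$\phi$ is conjugate over $K$ to $\psi$" means $\psi=\eta\circ\phi\circ\eta^{-1}$ for some invertible change of coordinates $\eta$ defined over $K$. *)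

theory Defs
  imports "HOL-Computational_Algebra.Polynomial"
begin

definition prime_subfield_poly :: "'k::field poly \<Rightarrow> bool" where
  "prime_subfield_poly f \<longleftrightarrow> (\<forall>i. coeff f i \<in> range (of_nat :: nat \<Rightarrow> 'k))"

definition transcendental_over_prime :: "'k::field \<Rightarrow> bool" where
  "transcendental_over_prime t \<longleftrightarrow>
     (\<forall>f. prime_subfield_poly f \<and> f \<noteq> 0 \<longrightarrow> poly f t \<noteq> 0)"

definition rat_fun_subfield :: "'k::field \<Rightarrow> 'k set" where
  "rat_fun_subfield t = {poly f t / poly g t | f g.
      prime_subfield_poly f \<and> prime_subfield_poly g \<and> poly g t \<noteq> 0}"

definition global_function_field :: "'k::field itself \<Rightarrow> bool" where
  "global_function_field _ \<longleftrightarrow> prime CHAR('k) \<and>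
     (\<exists>t::'k. transcendental_over_prime t \<and>
        (\<exists>B::'k set. finite B \<and>
           (\<forall>x. \<exists>c. (\<forall>b\<in>B. c b \<in> rat_fun_subfield t) \<and> x = (\<Sum>b\<in>B. c b * b))))"

definition full_constant_field :: "'k::field set" where
  "full_constant_field = {x. \<exists>f. prime_subfield_poly f \<and> f \<noteq> 0 \<and> poly f x = 0}"

text \<open>psi = eta o phi o eta^{-1} for an affine change of coordinates eta(X) = aX + b, a nonzero.\<close>
definition conjugate_over :: "'k::field poly \<Rightarrow> 'k poly \<Rightarrow> bool" where
  "conjugate_over phi psi \<longleftrightarrow> (\<exists>a b. a \<noteq> 0 \<and>
      psi = pcompose [:b, a:] (pcompose phi [:- b / a, 1 / a:]))"

end

theory Submission
  imports Defs "HOL-Library.FuncSet"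
begin

(* In characteristic p the full constant field F consists of the elements with only finitely many
   distinct powers: such an x satisfies x^i = x^j, and conversely a root of a nonzero F_p-polynomial
   lies in a finite ring spanned by finitely many of its powers. Finite rings generated by two such
   elements show that F is a subfield. F is finite: K is spanned by N elements over F_p(t), so an
   element a of F of degree > N over F_p gives an F_p(t)-linear relation among 1, a, ..., a^N;
   clearing denominators yields a polynomial over the finite ring F_p[a] vanishing at t, which must
   be zero since t is transcendental, and then the degree of a forces all coefficients to vanish.

   For (i), fix distinct x0, y0 in P: hypothesis (a) says that y |-> (y - x0)/(y0 - x0) maps P
   injectively into F. For (ii), conjugating phi by this affine map gives psi, which maps the image
   of P' into F; as P' has more than deg psi points, interpolation over the subfield F puts the
   coefficients of psi in F. *)

definition span_over :: "'a::comm_ring_1 set \<Rightarrow> 'a set \<Rightarrow> 'a set" where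
  "span_over C A = {(\<Sum>a\<in>A. c a * a) | c. \<forall>a\<in>A. c a \<in> C}"

definition polys_over :: "'a::zero set \<Rightarrow> 'a poly set" where
  "polys_over C = {p. \<forall>i. coeff p i \<in> C}"

definition finite_powers :: "'a::monoid_mult \<Rightarrow> bool" where
  "finite_powers x \<longleftrightarrow> finite (range (\<lambda>k::nat. x ^ k))"

locale subring_set =
  fixes C :: "'a::comm_ring_1 set"
  assumes zero_mem: "0 \<in> C" and one_mem: "1 \<in> C"
    and add_mem: "x \<in> C \<Longrightarrow> y \<in> C \<Longrightarrow> x + y \<in> C"
    and mult_mem: "x \<in> C \<Longrightarrow> y \<in> C \<Longrightarrow> x * y \<in> C"
    and uminus_mem: "x \<in> C \<Longrightarrow> - x \<in> C"
begin

lemma diff_mem: "x \<in> C \<Longrightarrow> y \<in> C \<Longrightarrow> x - y \<in> C"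
  using add_mem uminus_mem by (metis diff_conv_add_uminus)

lemma sum_mem: "(\<And>i. i \<in> I \<Longrightarrow> f i \<in> C) \<Longrightarrow> sum f I \<in> C"
  by (induction I rule: infinite_finite_induct) (auto intro: zero_mem add_mem)

lemma power_mem: "x \<in> C \<Longrightarrow> x ^ n \<in> C"
  by (induction n) (auto intro: one_mem mult_mem)

lemma finite_powers_if_mem: "finite C \<Longrightarrow> x \<in> C \<Longrightarrow> finite_powers x"
  unfolding finite_powers_def by (auto intro: finite_subset[of _ C] power_mem)

lemma span_overI: "\<forall>a\<in>A. c a \<in> C \<Longrightarrow> v = (\<Sum>a\<in>A. c a * a) \<Longrightarrow> v \<in> span_over C A"
  unfolding span_over_def by blast

lemma span_over_zero: "0 \<in> span_over C A"
  by (rule span_overI[of A "\<lambda>_. 0"]) (auto intro: zero_mem)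

lemma span_over_add:
  assumes "u \<in> span_over C A" "v \<in> span_over C A"
  shows "u + v \<in> span_over C A"
proof -
  obtain c e where "\<forall>a\<in>A. c a \<in> C" "u = (\<Sum>a\<in>A. c a * a)" "\<forall>a\<in>A. e a \<in> C" "v = (\<Sum>a\<in>A. e a * a)"
    using assms unfolding span_over_def by auto
  then show ?thesis
    by (intro span_overI[of A "\<lambda>a. c a + e a"]) (auto intro: add_mem simp: sum.distrib distrib_right)
qed

lemma span_over_scale:
  assumes "r \<in> C" "v \<in> span_over C A"
  shows "r * v \<in> span_over C A"
proof -
  obtain e where "\<forall>a\<in>A. e a \<in> C" "v = (\<Sum>a\<in>A. e a * a)"
    using assms(2) unfolding span_over_def by auto
  then show ?thesis using assms(1)
    by (intro span_overI[of A "\<lambda>a. r * e a"]) (auto intro: mult_mem simp: sum_distrib_left mult.assoc)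
qed

lemma span_over_sum: "(\<And>i. i \<in> I \<Longrightarrow> f i \<in> span_over C A) \<Longrightarrow> sum f I \<in> span_over C A"
  by (induction I rule: infinite_finite_induct) (auto intro: span_over_zero span_over_add)

lemma span_over_base:
  assumes "finite A" "x \<in> A"
  shows "x \<in> span_over C A"
proof (rule span_overI[of A "\<lambda>a. if a = x then 1 else 0"])
  have "(\<Sum>a\<in>A. (if a = x then 1 else 0) * a) = (\<Sum>a\<in>A. if a = x then x else 0)"
    by (rule sum.cong) auto
  then show "x = (\<Sum>a\<in>A. (if a = x then 1 else 0) * a)"
    using assms by (simp add: sum.delta)
qed (auto intro: zero_mem one_mem)

lemma span_over_superset: "finite A \<Longrightarrow> 1 \<in> A \<Longrightarrow> C \<subseteq> span_over C A"
  using span_over_scale[of _ 1 A] span_over_base[of A 1] by auto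

lemma span_over_mult_left:
  assumes "finite A" "\<And>a. a \<in> A \<Longrightarrow> z * a \<in> span_over C A" "v \<in> span_over C A"
  shows "z * v \<in> span_over C A"
proof -
  obtain e where e: "\<forall>a\<in>A. e a \<in> C" "v = (\<Sum>a\<in>A. e a * a)"
    using assms(3) unfolding span_over_def by auto
  have "z * v = (\<Sum>a\<in>A. e a * (z * a))"
    by (simp add: e sum_distrib_left algebra_simps)
  also have "\<dots> \<in> span_over C A"
  proof (rule span_over_sum)
    show "e a * (z * a) \<in> span_over C A" if "a \<in> A" for a
      using that assms(2) e(1) by (auto intro: span_over_scale)
  qed
  finally show ?thesis .
qed

lemma finite_span_over:
  assumes "finite A" "finite C"
  shows "finite (span_over C A)"
proof -
  have "span_over C A \<subseteq> (\<lambda>c. \<Sum>a\<in>A. c a * a) ` (A \<rightarrow>\<^sub>E C)"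
  proof
    fix v assume "v \<in> span_over C A"
    then obtain e where e: "\<forall>a\<in>A. e a \<in> C" "v = (\<Sum>a\<in>A. e a * a)"
      unfolding span_over_def by auto
    then have "restrict e A \<in> A \<rightarrow>\<^sub>E C" "v = (\<Sum>a\<in>A. restrict e A a * a)" by auto
    then show "v \<in> (\<lambda>c. \<Sum>a\<in>A. c a * a) ` (A \<rightarrow>\<^sub>E C)" by blast
  qed
  then show ?thesis by (rule finite_subset) (intro finite_imageI finite_PiE assms)
qed

lemma subring_set_span_over:
  assumes A: "finite A" "1 \<in> A" "\<And>a b. a \<in> A \<Longrightarrow> b \<in> A \<Longrightarrow> a * b \<in> A"
  shows "subring_set (span_over C A)"
proof
  have left: "a * v \<in> span_over C A" if "a \<in> A" "v \<in> span_over C A" for a v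
  proof (rule span_over_mult_left[OF A(1) _ that(2)])
    show "a * b \<in> span_over C A" if "b \<in> A" for b
      using A \<open>a \<in> A\<close> that by (intro span_over_base) auto
  qed
  show "x * y \<in> span_over C A" if x: "x \<in> span_over C A" and y: "y \<in> span_over C A" for x y
  proof (rule span_over_mult_left[OF A(1) _ y])
    show "x * a \<in> span_over C A" if "a \<in> A" for a
      using left[OF that x] by (simp add: mult.commute)
  qed
  show "- x \<in> span_over C A" if "x \<in> span_over C A" for x
    using span_over_scale[OF uminus_mem[OF one_mem] that] by simp
qed (use A in \<open>auto intro: span_over_zero span_over_base span_over_add\<close>)

lemma finite_subring_adjoin:
  assumes "finite C" "finite_powers x"
  obtains S where "subring_set S" "finite S" "C \<subseteq> S" "x \<in> S"
proof
  let ?A = "range (\<lambda>k::nat. x ^ k)"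
  have A: "finite ?A" "1 \<in> ?A" using assms(2) unfolding finite_powers_def by (auto intro: range_eqI[of _ _ 0])
  show "subring_set (span_over C ?A)"
    using A by (intro subring_set_span_over) (auto simp flip: power_add)
  show "finite (span_over C ?A)" by (rule finite_span_over[OF A(1) assms(1)])
  show "C \<subseteq> span_over C ?A" using A by (rule span_over_superset)
  show "x \<in> span_over C ?A" using A by (intro span_over_base) (auto intro: range_eqI[of _ _ 1])
qed

lemma pCons_mem_polys_over: "a \<in> C \<Longrightarrow> p \<in> polys_over C \<Longrightarrow> pCons a p \<in> polys_over C"
  unfolding polys_over_def by (simp add: coeff_pCons split: nat.split)

lemma monom_mem_polys_over: "a \<in> C \<Longrightarrow> monom a n \<in> polys_over C"
  unfolding polys_over_def by (simp add: coeff_monom zero_mem)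

lemma subring_set_polys_over: "subring_set (polys_over C)"
proof
  show "p * q \<in> polys_over C" if "p \<in> polys_over C" "q \<in> polys_over C" for p q
    using that by (auto simp: polys_over_def coeff_mult intro!: sum_mem mult_mem)
  show "1 \<in> polys_over C"
    unfolding polys_over_def by (simp add: zero_mem one_mem)
qed (simp_all add: polys_over_def zero_mem add_mem uminus_mem)

lemma monic_root_power_mem_span_over:
  assumes g: "g \<in> polys_over C" "degree g = m" "0 < m" "coeff g m = 1" "poly g x = 0"
  shows "x ^ k \<in> span_over C ((\<lambda>i. x ^ i) ` {..<m})"
proof -
  define A where "A = (\<lambda>i. x ^ i) ` {..<m}"
  have fA: "finite A"
    unfolding A_def by simp
  have A: "x ^ i \<in> A" if "i < m" for i
    using that unfolding A_def by simp
  have "0 = (\<Sum>i\<le>m. coeff g i * x ^ i)"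
    using g by (simp add: poly_altdef)
  also have "\<dots> = (\<Sum>i<m. coeff g i * x ^ i) + x ^ m"
    using g by (simp add: lessThan_Suc_atMost[symmetric])
  finally have "x ^ m = (\<Sum>i<m. (- coeff g i) * x ^ i)"
    by (simp add: sum_negf eq_neg_iff_add_eq_0 add.commute)
  also have "\<dots> \<in> span_over C A"
    using g(1) fA A unfolding polys_over_def
    by (intro span_over_sum span_over_scale span_over_base uminus_mem) auto
  finally have top: "x ^ m \<in> span_over C A" .
  have shift: "x * a \<in> span_over C A" if "a \<in> A" for a
  proof -
    obtain i where i: "i < m" "a = x ^ i" using \<open>a \<in> A\<close> unfolding A_def by auto
    show ?thesis
    proof (cases "Suc i < m")
      case True
      then show ?thesis using span_over_base[OF fA A[of "Suc i"]] i by simp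
    next
      case False
      then have "m = Suc i" using i by simp
      then have "x * a = x ^ m" using i by simp
      then show ?thesis using top by simp
    qed
  qed
  show ?thesis unfolding A_def[symmetric]
  proof (induction k)
    case 0
    show ?case using span_over_base[OF fA A[of 0]] g(3) by simp
  next
    case (Suc k)
    then show ?case using span_over_mult_left[OF fA shift] by simp
  qed
qed

end

lemma finite_powers_power_eq:
  assumes "finite_powers x"
  obtains i j where "i < j" "x ^ i = x ^ j"
proof -
  have "\<not> inj (\<lambda>k::nat. x ^ k)"
    using assms finite_imageD infinite_UNIV_nat unfolding finite_powers_def by blast
  then obtain i j where "i \<noteq> j" "x ^ i = x ^ j" unfolding inj_def by blast
  then show ?thesis using that by (metis linorder_neqE_nat)
qed

lemma subring_set_inverse_mem:
  fixes C :: "'a::field set"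
  assumes C: "subring_set C" "finite C" and c: "c \<in> C"
  shows "inverse c \<in> C"
proof (cases "c = 0")
  case True
  then show ?thesis using subring_set.zero_mem[OF C(1)] by simp
next
  case False
  obtain i j where ij: "i < j" "c ^ i = c ^ j"
    using finite_powers_power_eq subring_set.finite_powers_if_mem[OF C c] by blast
  then have "c ^ i * c ^ (j - i) = c ^ i * 1"
    by (metis le_add_diff_inverse less_imp_le power_add mult_1_right)
  then have "c ^ (j - i) = 1"
    using False by simp
  moreover have "j - i = Suc (j - Suc i)"
    using ij(1) by (simp add: Suc_diff_Suc)
  ultimately have "c * c ^ (j - Suc i) = 1"
    by (metis power_Suc)
  then have "inverse c = c ^ (j - Suc i)"
    by (rule inverse_unique)
  then show ?thesis using subring_set.power_mem[OF C(1) c] by simp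
qed

lemma finite_powers_if_root:
  fixes C :: "'a::field set"
  assumes C: "subring_set C" "finite C" and g: "g \<in> polys_over C" "g \<noteq> 0" "poly g x = 0"
  shows "finite_powers x"
proof (cases "degree g = 0")
  case True
  then obtain a where "g = [:a:]" by (rule degree_eq_zeroE)
  then show ?thesis using g by simp
next
  case False
  define g' where "g' = smult (inverse (lead_coeff g)) g"
  have "inverse (lead_coeff g) \<in> C"
    using g(1) by (intro subring_set_inverse_mem[OF C]) (simp add: polys_over_def)
  then have "g' \<in> polys_over C"
    using g(1) subring_set.mult_mem[OF C(1)] by (simp add: g'_def polys_over_def)
  moreover have "degree g' = degree g" "coeff g' (degree g) = 1" "poly g' x = 0"
    using g by (simp_all add: g'_def)
  ultimately have "range (\<lambda>k. x ^ k) \<subseteq> span_over C ((\<lambda>i. x ^ i) ` {..<degree g})"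
    using subring_set.monic_root_power_mem_span_over[OF C(1)] False by blast
  moreover have "finite (span_over C ((\<lambda>i. x ^ i) ` {..<degree g}))"
    using C by (intro subring_set.finite_span_over) auto
  ultimately show ?thesis unfolding finite_powers_def by (rule finite_subset)
qed

lemma of_nat_mod_CHAR: "of_nat (n mod CHAR('a)) = (of_nat n :: 'a::semiring_1)"
proof -
  have "(of_nat n :: 'a) = of_nat (n mod CHAR('a)) + of_nat (CHAR('a) * (n div CHAR('a)))"
    by (metis of_nat_add mod_mult_div_eq)
  then show ?thesis by (simp add: of_nat_eq_0_iff_char_dvd)
qed

lemma finite_range_of_nat:
  assumes "CHAR('a::semiring_1) > 0"
  shows "finite (range (of_nat :: nat \<Rightarrow> 'a))"
proof (rule finite_subset)
  show "range (of_nat :: nat \<Rightarrow> 'a) \<subseteq> of_nat ` {..<CHAR('a)}"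
  proof
    fix x :: 'a assume "x \<in> range of_nat"
    then obtain n where "x = of_nat (n mod CHAR('a))" by (auto simp: of_nat_mod_CHAR)
    then show "x \<in> of_nat ` {..<CHAR('a)}" using assms by simp
  qed
qed simp

lemma subring_set_range_of_nat:
  assumes "CHAR('a::comm_ring_1) > 0"
  shows "subring_set (range (of_nat :: nat \<Rightarrow> 'a))"
proof
  show "- x \<in> range (of_nat :: nat \<Rightarrow> 'a)" if x: "x \<in> range of_nat" for x
  proof -
    obtain n where n: "x = of_nat n" using x by auto
    have "of_nat ((CHAR('a) - 1) * n) + x = (of_nat (CHAR('a) * n) :: 'a)"
      using assms by (simp add: n of_nat_mult of_nat_diff algebra_simps)
    then have "- x = of_nat ((CHAR('a) - 1) * n)" by (simp add: neg_eq_iff_add_eq_0 add.commute)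
    then show ?thesis by (metis rangeI)
  qed
qed (auto simp flip: of_nat_add of_nat_mult intro: range_eqI[of _ _ 0] range_eqI[of _ _ 1])

lemma prime_subfield_poly_iff: "prime_subfield_poly f \<longleftrightarrow> f \<in> polys_over (range of_nat)"
  unfolding prime_subfield_poly_def polys_over_def by simp

lemma finite_powers_common_subring:
  fixes x y :: "'a::comm_ring_1"
  assumes "CHAR('a) > 0" "finite_powers x" "finite_powers y"
  obtains S where "subring_set S" "finite S" "x \<in> S" "y \<in> S"
proof -
  obtain S\<^sub>x where Sx: "subring_set S\<^sub>x" "finite S\<^sub>x" "x \<in> S\<^sub>x"
    using subring_set.finite_subring_adjoin[OF subring_set_range_of_nat finite_range_of_nat] assms
    by metis
  obtain S where "subring_set S" "finite S" "S\<^sub>x \<subseteq> S" "y \<in> S"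
    using subring_set.finite_subring_adjoin[OF Sx(1,2) assms(3)] by metis
  then show ?thesis using that Sx(3) by blast
qed

lemma finite_powers_ring_ops:
  fixes x y :: "'a::comm_ring_1"
  assumes "CHAR('a) > 0" "finite_powers x" "finite_powers y"
  shows "finite_powers (x + y)" "finite_powers (x * y)" "finite_powers (- x)"
proof -
  obtain S where S: "subring_set S" "finite S" and "x \<in> S" "y \<in> S"
    using finite_powers_common_subring[OF assms] .
  then have "x + y \<in> S" "x * y \<in> S" "- x \<in> S"
    by (simp_all add: subring_set.add_mem subring_set.mult_mem subring_set.uminus_mem)
  then show "finite_powers (x + y)" "finite_powers (x * y)" "finite_powers (- x)"
    by (simp_all add: subring_set.finite_powers_if_mem[OF S])
qed

lemma finite_powers_of_nat:
  assumes "CHAR('a::comm_ring_1) > 0"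
  shows "finite_powers (of_nat n :: 'a)"
  using subring_set.finite_powers_if_mem[OF subring_set_range_of_nat[OF assms] finite_range_of_nat[OF assms]]
  by simp

lemma finite_powers_inverse:
  fixes x :: "'a::field"
  assumes "finite_powers x"
  shows "finite_powers (inverse x)"
proof -
  have "range (\<lambda>k::nat. inverse x ^ k) = inverse ` range (\<lambda>k. x ^ k)"
    by (auto simp: power_inverse)
  then show ?thesis using assms unfolding finite_powers_def by simp
qed

lemma full_constant_field_iff_finite_powers:
  assumes "CHAR('a::field) > 0"
  shows "(x :: 'a) \<in> full_constant_field \<longleftrightarrow> finite_powers x"
proof
  assume "x \<in> full_constant_field"
  then show "finite_powers x"
    unfolding full_constant_field_def prime_subfield_poly_iff
    using finite_powers_if_root[OF subring_set_range_of_nat[OF assms] finite_range_of_nat[OF assms]]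
    by blast
next
  assume "finite_powers x"
  then obtain i j where ij: "i < j" "x ^ i = x ^ j" by (rule finite_powers_power_eq)
  have R: "subring_set (range (of_nat :: nat \<Rightarrow> 'a))"
    by (rule subring_set_range_of_nat[OF assms])
  have "(monom 1 j - monom 1 i :: 'a poly) \<in> polys_over (range of_nat)"
    by (intro subring_set.diff_mem[OF subring_set.subring_set_polys_over[OF R]]
        subring_set.monom_mem_polys_over[OF R] subring_set.one_mem[OF R])
  moreover have "monom (1::'a) j - monom 1 i \<noteq> 0"
    using ij(1) by (metis coeff_diff coeff_monom diff_zero less_not_refl one_neq_zero coeff_0)
  moreover have "poly (monom 1 j - monom 1 i) x = 0"
    using ij(2) by (simp add: poly_monom)
  ultimately show "x \<in> full_constant_field"
    unfolding full_constant_field_def prime_subfield_poly_iff by blast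
qed

locale subfield_set = subring_set C for C :: "'a::field set" +
  assumes inverse_mem: "x \<in> C \<Longrightarrow> inverse x \<in> C"
begin

lemma divide_mem: "x \<in> C \<Longrightarrow> y \<in> C \<Longrightarrow> x / y \<in> C"
  by (simp add: divide_inverse mult_mem inverse_mem)

lemma polys_over_if_values_mem:
  assumes "finite U" "U \<subseteq> C" "degree p < card U" "\<forall>u\<in>U. poly p u \<in> C"
  shows "p \<in> polys_over C"
  using assms
proof (induction U arbitrary: p rule: finite_induct)
  case empty
  then show ?case by simp
next
  case (insert u0 U)
  interpret polys: subring_set "polys_over C"
    by (rule subring_set_polys_over)
  define c where "c = poly p u0"
  have u0: "u0 \<in> C" "c \<in> C"
    using insert.prems by (auto simp: c_def)
  have "[:- u0, 1:] dvd p - [:c:]"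
    by (simp add: c_def flip: poly_eq_0_iff_dvd)
  then obtain r where r: "p - [:c:] = [:- u0, 1:] * r"
    by (rule dvdE)
  have r_values: "\<forall>u\<in>U. poly r u \<in> C"
  proof
    fix u assume "u \<in> U"
    then have u: "u \<noteq> u0" "u \<in> C" "poly p u \<in> C"
      using insert by auto
    have "(u - u0) * poly r u = poly p u - c"
      using arg_cong[OF r, of "\<lambda>q. poly q u"] by (simp add: algebra_simps)
    then have "poly r u = (poly p u - c) / (u - u0)"
      using u(1) by (simp add: field_simps)
    then show "poly r u \<in> C"
      using u u0 by (simp add: divide_mem diff_mem)
  qed
  have "r \<in> polys_over C"
  proof (cases "r = 0")
    case True
    then show ?thesis using polys.zero_mem by simp
  next
    case False
    have "degree ([:- u0, 1:] * r) = 1 + degree r"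
      using False by (subst degree_mult_eq) auto
    then have "1 + degree r = degree (p - [:c:])"
      using r by simp
    also have "\<dots> \<le> degree p"
      by (rule degree_diff_le) simp_all
    finally have "degree r < card U"
      using insert by simp
    then show ?thesis using insert r_values by auto
  qed
  moreover have "p = [:c:] + [:- u0, 1:] * r"
    using r by (simp add: algebra_simps)
  ultimately show ?case
    using u0 by (metis polys.add_mem polys.mult_mem polys.zero_mem pCons_mem_polys_over uminus_mem one_mem)
qed

lemma linear_relation_if_eliminated:
  assumes "finite I" "k \<in> I" "\<forall>i\<in>I. r i \<in> C"
    and c': "\<forall>i\<in>I - {k}. c' i \<in> C" "\<exists>i\<in>I - {k}. c' i \<noteq> 0"
      "(\<Sum>i\<in>I - {k}. c' i * (v i - r i * v k)) = 0"
  shows "\<exists>c. (\<forall>i\<in>I. c i \<in> C) \<and> (\<exists>i\<in>I. c i \<noteq> 0) \<and> (\<Sum>i\<in>I. c i * v i) = 0"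
proof -
  define s where "s = (\<Sum>i\<in>I - {k}. c' i * r i)"
  define c where "c i = (if i = k then - s else c' i)" for i
  have "(\<Sum>i\<in>I. c i * v i) = c k * v k + (\<Sum>i\<in>I - {k}. c' i * ((v i - r i * v k) + r i * v k))"
    using assms(1,2) by (simp add: sum.remove c_def)
  also have "\<dots> = - s * v k + (\<Sum>i\<in>I - {k}. c' i * (v i - r i * v k)) + s * v k"
    unfolding c_def s_def distrib_left sum.distrib sum_distrib_right by (simp add: mult.assoc)
  also have "\<dots> = 0"
    using c'(3) by simp
  finally have "(\<Sum>i\<in>I. c i * v i) = 0" .
  moreover have "s \<in> C"
    unfolding s_def using c'(1) assms(3) by (auto intro!: sum_mem mult_mem)
  ultimately show ?thesis
    using c'(1,2) by (intro exI[of _ c]) (auto simp: c_def uminus_mem)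
qed

lemma span_over_linear_dependent:
  assumes "finite B" "finite I" "card B < card I" "\<forall>i\<in>I. v i \<in> span_over C B"
  shows "\<exists>c. (\<forall>i\<in>I. c i \<in> C) \<and> (\<exists>i\<in>I. c i \<noteq> 0) \<and> (\<Sum>i\<in>I. c i * v i) = 0"
  using assms(1) assms(2-4)
proof (induction B arbitrary: I v rule: finite_induct)
  case empty
  then obtain k where "k \<in> I" by fastforce
  moreover have "v i = 0" if "i \<in> I" for i
    using empty.prems that by (simp add: span_over_def)
  ultimately show ?case
    by (intro exI[of _ "\<lambda>i. if i = k then 1 else 0"]) (auto simp: zero_mem one_mem)
next
  case (insert b B)
  have "\<forall>i\<in>I. \<exists>c. (\<forall>b'\<in>insert b B. c b' \<in> C) \<and> v i = (\<Sum>b'\<in>insert b B. c b' * b')"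
    using insert.prems(3) unfolding span_over_def by blast
  then obtain cf where cf: "\<forall>i\<in>I. (\<forall>b'\<in>insert b B. cf i b' \<in> C) \<and> v i = (\<Sum>b'\<in>insert b B. cf i b' * b')"
    by (metis bchoice)
  define w where "w i = (\<Sum>b'\<in>B. cf i b' * b')" for i
  have v: "v i = cf i b * b + w i" if "i \<in> I" for i
    using cf that insert.hyps by (simp add: w_def)
  have w: "w i \<in> span_over C B" and cf_b: "cf i b \<in> C" if "i \<in> I" for i
    using cf that unfolding w_def by (auto intro: span_overI)
  show ?case
  proof (cases "\<forall>i\<in>I. cf i b = 0")
    case True
    then show ?thesis
      using insert.IH[of I v] insert.prems insert.hyps v w by simp
  next
    case False
    then obtain k where k: "k \<in> I" "cf k b \<noteq> 0" by blast
    \<comment> \<open>Subtracting \<open>lam i * v k\<close> removes the \<open>b\<close>-coordinate, so induction applies to \<open>I - {k}\<close>.\<close>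
    define lam where "lam i = cf i b / cf k b" for i
    have lam: "lam i \<in> C" if "i \<in> I" for i
      unfolding lam_def using cf_b that k by (simp add: divide_mem)
    have "v i - lam i * v k \<in> span_over C B" if "i \<in> I" for i
    proof -
      have "v i - lam i * v k = w i + (- lam i) * w k"
        using v[OF that] v[OF k(1)] k(2) by (simp add: lam_def algebra_simps)
      moreover have "w i + (- lam i) * w k \<in> span_over C B"
        using w that k lam by (intro span_over_add span_over_scale uminus_mem) auto
      ultimately show ?thesis by simp
    qed
    moreover have "card B < card (I - {k})"
      using insert k by simp
    ultimately obtain c' where "\<forall>i\<in>I - {k}. c' i \<in> C" "\<exists>i\<in>I - {k}. c' i \<noteq> 0"
      "(\<Sum>i\<in>I - {k}. c' i * (v i - lam i * v k)) = 0"
      using insert.IH[of "I - {k}" "\<lambda>i. v i - lam i * v k"] insert.prems by auto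
    then show ?thesis
      using linear_relation_if_eliminated[of I k lam] insert.prems(1) k(1) lam by blast
  qed
qed

end

lemma subfield_set_full_constant_field:
  assumes "CHAR('a::field) > 0"
  shows "subfield_set (full_constant_field :: 'a set)"
  using finite_powers_of_nat[OF assms, of 0] finite_powers_of_nat[OF assms, of 1]
  by unfold_locales
    (auto simp: full_constant_field_iff_finite_powers[OF assms] assms
      intro: finite_powers_ring_ops finite_powers_inverse)

lemma rat_fun_subfield_iff:
  "x \<in> rat_fun_subfield t \<longleftrightarrow> (\<exists>f g. f \<in> polys_over (range of_nat) \<and> g \<in> polys_over (range of_nat) \<and>
     poly g t \<noteq> 0 \<and> x = poly f t / poly g t)"
  unfolding rat_fun_subfield_def prime_subfield_poly_iff by blast

lemma subfield_set_rat_fun_subfield: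
  fixes t :: "'k::field"
  assumes "CHAR('k) > 0"
  shows "subfield_set (rat_fun_subfield t)"
proof -
  interpret polys: subring_set "polys_over (range (of_nat :: nat \<Rightarrow> 'k))"
    by (rule subring_set.subring_set_polys_over[OF subring_set_range_of_nat[OF assms]])
  have quotient: "poly f t / poly g t \<in> rat_fun_subfield t"
    if "f \<in> polys_over (range of_nat)" "g \<in> polys_over (range of_nat)" "poly g t \<noteq> 0" for f g
    using that unfolding rat_fun_subfield_iff by blast
  show ?thesis
  proof unfold_locales
    show "0 \<in> rat_fun_subfield t" "1 \<in> rat_fun_subfield t"
      using quotient[of 0 1] quotient[of 1 1] polys.zero_mem polys.one_mem by simp_all
  next
    fix x y assume "x \<in> rat_fun_subfield t" "y \<in> rat_fun_subfield t"
    then obtain f g f' g' where fg: "f \<in> polys_over (range of_nat)" "g \<in> polys_over (range of_nat)"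
        "poly g t \<noteq> 0" "x = poly f t / poly g t"
      and fg': "f' \<in> polys_over (range of_nat)" "g' \<in> polys_over (range of_nat)"
        "poly g' t \<noteq> 0" "y = poly f' t / poly g' t"
      unfolding rat_fun_subfield_iff by blast
    show "x + y \<in> rat_fun_subfield t"
      using quotient[of "f * g' + f' * g" "g * g'"] fg fg'
      by (simp add: polys.add_mem polys.mult_mem add_divide_distrib)
    show "x * y \<in> rat_fun_subfield t"
      using quotient[of "f * f'" "g * g'"] fg fg' by (simp add: polys.mult_mem)
  next
    fix x assume "x \<in> rat_fun_subfield t"
    then obtain f g where fg: "f \<in> polys_over (range of_nat)" "g \<in> polys_over (range of_nat)"
        "poly g t \<noteq> 0" "x = poly f t / poly g t"
      unfolding rat_fun_subfield_iff by blast
    show "- x \<in> rat_fun_subfield t"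
      using quotient[of "- f" g] fg by (simp add: polys.uminus_mem)
    show "inverse x \<in> rat_fun_subfield t"
      using quotient[of g f] quotient[of 0 1] fg polys.zero_mem polys.one_mem
      by (cases "poly f t = 0") simp_all
  qed
qed

lemma rat_fun_subfield_common_denominator:
  fixes t :: "'k::field"
  assumes "CHAR('k) > 0" "finite I" "\<forall>i\<in>I. c i \<in> rat_fun_subfield t"
  shows "\<exists>G h. G \<in> polys_over (range of_nat) \<and> poly G t \<noteq> 0 \<and>
    (\<forall>i\<in>I. h i \<in> polys_over (range of_nat) \<and> poly (h i) t = c i * poly G t)"
proof -
  interpret polys: subring_set "polys_over (range (of_nat :: nat \<Rightarrow> 'k))"
    by (rule subring_set.subring_set_polys_over[OF subring_set_range_of_nat[OF assms(1)]])
  show ?thesis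
    using assms(2,3)
  proof (induction I rule: finite_induct)
    case empty
    show ?case using polys.one_mem by (intro exI[of _ 1]) simp
  next
    case (insert k I)
    obtain G h where G: "G \<in> polys_over (range of_nat)" "poly G t \<noteq> 0"
      and h: "\<forall>i\<in>I. h i \<in> polys_over (range of_nat) \<and> poly (h i) t = c i * poly G t"
      using insert by auto
    obtain f g where fg: "f \<in> polys_over (range of_nat)" "g \<in> polys_over (range of_nat)"
      "poly g t \<noteq> 0" "c k = poly f t / poly g t"
      using insert.prems unfolding rat_fun_subfield_iff by blast
    show ?case
    proof (intro exI conjI ballI)
      show "G * g \<in> polys_over (range of_nat)" "poly (G * g) t \<noteq> 0"
        using G fg by (simp_all add: polys.mult_mem)
      fix i assume "i \<in> insert k I"
      then show "(if i = k then f * G else h i * g) \<in> polys_over (range of_nat)"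
        and "poly (if i = k then f * G else h i * g) t = c i * poly (G * g) t"
        using h fg G by (auto simp: polys.mult_mem)
    qed
  qed
qed

lemma transcendental_over_prime_poly_eq_0:
  fixes t :: "'k::field"
  assumes "CHAR('k) > 0" "transcendental_over_prime t"
    and S: "subring_set S" "finite S" and Q: "Q \<in> polys_over S" "poly Q t = 0"
  shows "Q = 0"
proof (rule ccontr)
  assume "Q \<noteq> 0"
  then have "t \<in> full_constant_field"
    using finite_powers_if_root[OF S Q(1) _ Q(2)] full_constant_field_iff_finite_powers[OF assms(1)] by blast
  then show False
    using assms(2) unfolding full_constant_field_def transcendental_over_prime_def by blast
qed

lemma finite_polys_over_degree_le:
  assumes "finite C"
  shows "finite {p \<in> polys_over C. degree p \<le> N}"
proof (rule finite_subset)
  show "{p \<in> polys_over C. degree p \<le> N} \<subseteq> Poly ` {xs. set xs \<subseteq> C \<and> length xs \<le> Suc N}"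
  proof
    fix p assume p: "p \<in> {p \<in> polys_over C. degree p \<le> N}"
    then have "set (coeffs p) \<subseteq> C" "length (coeffs p) \<le> Suc N"
      by (auto simp: polys_over_def coeffs_def)
    then show "p \<in> Poly ` {xs. set xs \<subseteq> C \<and> length xs \<le> Suc N}"
      by (intro image_eqI[of _ _ "coeffs p"]) auto
  qed
  show "finite (Poly ` {xs. set xs \<subseteq> C \<and> length xs \<le> Suc N})"
    using assms by (simp add: finite_lists_length_le)
qed

lemma infinite_full_constant_field_obtain_large_degree:
  assumes "CHAR('k::field) > 0" "infinite (full_constant_field :: 'k set)"
  obtains a where "a \<in> (full_constant_field :: 'k set)"
    "\<And>f. f \<in> polys_over (range of_nat) \<Longrightarrow> degree f \<le> N \<Longrightarrow> poly f a = 0 \<Longrightarrow> f = 0"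
proof -
  define small where "small = {f \<in> polys_over (range (of_nat :: nat \<Rightarrow> 'k)). degree f \<le> N} - {0}"
  have "finite small"
    unfolding small_def using finite_polys_over_degree_le[OF finite_range_of_nat[OF assms(1)]] by blast
  then have "finite (\<Union>f\<in>small. {x. poly f x = 0})"
    by (auto simp: small_def intro: poly_roots_finite)
  then have "full_constant_field - (\<Union>f\<in>small. {x. poly f x = 0}) \<noteq> {}"
    using assms(2) by (intro infinite_imp_nonempty Diff_infinite_finite)
  then obtain a where "a \<in> full_constant_field" "a \<notin> (\<Union>f\<in>small. {x. poly f x = 0})"
    by blast
  then show ?thesis using that unfolding small_def by blast
qed

lemma powers_linear_independent_over_prime_polys:
  fixes a :: "'k::field"
  assumes "CHAR('k) > 0"
    and a: "\<And>f. f \<in> polys_over (range of_nat) \<Longrightarrow> degree f \<le> N \<Longrightarrow> poly f a = 0 \<Longrightarrow> f = 0"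
    and h: "\<forall>i\<le>N. h i \<in> polys_over (range of_nat)" and rel: "(\<Sum>i\<le>N. smult (a ^ i) (h i)) = 0"
  shows "\<forall>i\<le>N. h i = 0"
proof -
  interpret prime_field: subring_set "range (of_nat :: nat \<Rightarrow> 'k)"
    by (rule subring_set_range_of_nat[OF assms(1)])
  interpret polys: subring_set "polys_over (range (of_nat :: nat \<Rightarrow> 'k))"
    by (rule prime_field.subring_set_polys_over)
  have "coeff (h i) j = 0" if "i \<le> N" for i j
  proof -
    define H where "H = (\<Sum>i\<le>N. monom (coeff (h i) j) i)"
    have "H \<in> polys_over (range of_nat)"
      unfolding H_def using h
      by (intro polys.sum_mem prime_field.monom_mem_polys_over) (auto simp: polys_over_def)
    moreover have "degree H \<le> N"
      unfolding H_def by (intro degree_sum_le) (auto intro: order.trans[OF degree_monom_le])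
    moreover have "poly H a = coeff (\<Sum>i\<le>N. smult (a ^ i) (h i)) j"
      unfolding H_def by (simp add: poly_sum poly_monom coeff_sum mult.commute)
    ultimately have "H = 0" using a rel by simp
    then show ?thesis using coeff_sum_monom[OF that, of "\<lambda>i. coeff (h i) j"] by (simp add: H_def)
  qed
  then show ?thesis by (simp add: poly_eq_iff)
qed

lemma finite_full_constant_field:
  assumes "global_function_field TYPE('k::field)"
  shows "finite (full_constant_field :: 'k set)"
proof (rule ccontr)
  assume infinite: "infinite (full_constant_field :: 'k set)"
  have char: "CHAR('k) > 0"
    using assms by (simp add: global_function_field_def prime_gt_0_nat)
  obtain t :: 'k and B where t: "transcendental_over_prime t" and B: "finite B"
    and "\<forall>x. \<exists>c. (\<forall>b\<in>B. c b \<in> rat_fun_subfield t) \<and> x = (\<Sum>b\<in>B. c b * b)"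
    using assms unfolding global_function_field_def by blast
  then have spans: "x \<in> span_over (rat_fun_subfield t) B" for x
    unfolding span_over_def by blast
  define N where "N = card B"
  obtain a :: 'k where a: "a \<in> full_constant_field"
    and a_large: "\<And>f. f \<in> polys_over (range of_nat) \<Longrightarrow> degree f \<le> N \<Longrightarrow> poly f a = 0 \<Longrightarrow> f = 0"
    using infinite_full_constant_field_obtain_large_degree[OF char infinite] by metis
  obtain c where c: "\<forall>i\<le>N. c i \<in> rat_fun_subfield t" "\<exists>i\<le>N. c i \<noteq> 0" "(\<Sum>i\<le>N. c i * a ^ i) = 0"
    using subfield_set.span_over_linear_dependent[OF subfield_set_rat_fun_subfield[OF char, of t] B,
        of "{..N}" "\<lambda>i. a ^ i"] spans
    by (auto simp: N_def)
  obtain G h where G: "poly G t \<noteq> 0"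
    and h: "\<forall>i\<le>N. h i \<in> polys_over (range of_nat) \<and> poly (h i) t = c i * poly G t"
    using rat_fun_subfield_common_denominator[OF char, of "{..N}" c t] c(1) by auto
  obtain S where S: "subring_set S" "finite S" "range of_nat \<subseteq> S" "a \<in> S"
    using subring_set.finite_subring_adjoin[OF subring_set_range_of_nat[OF char] finite_range_of_nat[OF char]]
      a full_constant_field_iff_finite_powers[OF char] by metis
  interpret S: subring_set S by (rule S(1))
  define Q where "Q = (\<Sum>i\<le>N. smult (a ^ i) (h i))"
  have "coeff Q j \<in> S" for j
    unfolding Q_def coeff_sum coeff_smult using h S(3,4)
    by (intro S.sum_mem S.mult_mem S.power_mem) (auto simp: polys_over_def)
  moreover have "poly Q t = (\<Sum>i\<le>N. c i * a ^ i) * poly G t"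
    unfolding Q_def poly_sum sum_distrib_right using h by (intro sum.cong) (simp_all add: mult_ac)
  ultimately have "Q = 0"
    using transcendental_over_prime_poly_eq_0[OF char t S(1,2)] c(3) by (simp add: polys_over_def)
  then have "\<forall>i\<le>N. h i = 0"
    using powers_linear_independent_over_prime_polys[OF char a_large] h by (simp add: Q_def)
  then show False
    using c(2) h G by auto
qed

definition proportional_differences :: "'a::field set \<Rightarrow> 'a set \<Rightarrow> bool" where
  "proportional_differences S P \<longleftrightarrow> (\<forall>x\<in>P. \<forall>y\<in>P. \<forall>x'\<in>P. \<forall>y'\<in>P. x \<noteq> y \<longrightarrow> x' \<noteq> y' \<longrightarrow>
     (\<exists>u\<in>S - {0}. y' - x' = u * (y - x)))"

lemma proportional_differences_quotient_mem:
  assumes "proportional_differences S P" "0 \<in> S" "x0 \<in> P" "y0 \<in> P" "x0 \<noteq> y0" "y \<in> P"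
  shows "(y - x0) / (y0 - x0) \<in> S"
proof (cases "y = x0")
  case False
  then obtain u where "u \<in> S" "y - x0 = u * (y0 - x0)"
    using assms(1)[unfolded proportional_differences_def, rule_format, of x0 y0 x0 y] assms(3-6)
    by blast
  then show ?thesis using assms(5) by simp
qed (use assms(2) in simp)

lemma card_le_if_proportional_differences:
  assumes "proportional_differences S P" "0 \<in> S" "finite S"
  shows "finite P \<and> card P \<le> card S"
proof (cases "\<exists>x0\<in>P. \<exists>y0\<in>P. x0 \<noteq> y0")
  case True
  then obtain x0 y0 where xy: "x0 \<in> P" "y0 \<in> P" "x0 \<noteq> y0" by blast
  let ?h = "\<lambda>y. (y - x0) / (y0 - x0)"
  have "inj_on ?h P"
    using xy by (auto simp: inj_on_def divide_cancel_right)
  moreover have "?h ` P \<subseteq> S"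
    using proportional_differences_quotient_mem[OF assms(1,2) xy] by blast
  ultimately show ?thesis
    using assms(3) by (meson card_inj_on_le finite_imageD finite_subset)
next
  case False
  then obtain x where "P \<subseteq> {x}"
    by blast
  then have "finite P" "card P \<le> card {x}"
    using finite_subset[of P "{x}"] card_mono[of "{x}" P] by simp_all
  moreover have "1 \<le> card S"
    using assms(2,3) by (simp add: Suc_le_eq card_gt_0_iff ex_in_conv[symmetric]) blast
  ultimately show ?thesis by simp
qed

lemma conjugate_over_polys_over_if_proportional_differences:
  fixes phi :: "'a::field poly"
  assumes S: "subfield_set S" and P: "proportional_differences S P"
    and P': "P' \<union> poly phi ` P' \<subseteq> P" "finite P'" "degree phi < card P'"
  shows "\<exists>psi. conjugate_over phi psi \<and> psi \<in> polys_over S"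
proof (cases "\<exists>x0\<in>P'. \<exists>y0\<in>P'. x0 \<noteq> y0")
  case True
  interpret S: subfield_set S by (rule S)
  obtain x0 y0 where xy: "x0 \<in> P" "y0 \<in> P" "x0 \<noteq> y0" "x0 \<in> P'"
    using True P'(1) by blast
  define \<delta> where "\<delta> = y0 - x0"
  have \<delta>: "\<delta> \<noteq> 0" using xy by (simp add: \<delta>_def)
  define h where "h y = (y - x0) / \<delta>" for y
  define psi where "psi = pcompose [:- x0 / \<delta>, 1 / \<delta>:] (pcompose phi [:x0, \<delta>:])"
  have "conjugate_over phi psi"
    unfolding conjugate_over_def psi_def using \<delta>
    by (intro exI[of _ "1 / \<delta>"] exI[of _ "- x0 / \<delta>"]) simp
  moreover have "psi \<in> polys_over S"
  proof (rule S.polys_over_if_values_mem)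
    have "inj_on h P'"
      using \<delta> by (auto simp: inj_on_def h_def divide_cancel_right)
    then show "degree psi < card (h ` P')"
      using P'(3) \<delta> by (simp add: psi_def degree_pcompose card_image)
    have hS: "h y \<in> S" if "y \<in> P" for y
      unfolding h_def \<delta>_def by (rule proportional_differences_quotient_mem[OF P S.zero_mem xy(1,2,3) that])
    show "h ` P' \<subseteq> S"
      using hS P'(1) by blast
    have "poly psi (h y) = h (poly phi y)" for y
      using \<delta> by (simp add: psi_def h_def poly_pcompose field_simps)
    then show "\<forall>u\<in>h ` P'. poly psi u \<in> S"
      using hS P'(1) by auto
  qed (use P'(2) in simp)
  ultimately show ?thesis by blast
next
  case False
  then have "card P' \<le> 1"
    using P'(2) by (simp add: card_le_Suc0_iff_eq)
  then have "degree phi = 0"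
    using P'(3) by simp
  then obtain c where phi: "phi = [:c:]"
    by (rule degree_eq_zeroE)
  have "conjugate_over phi 0"
    unfolding conjugate_over_def phi by (intro exI[of _ 1] exI[of _ "- c"]) (simp add: pcompose_pCons)
  then show ?thesis
    using subring_set.zero_mem[OF subring_set.subring_set_polys_over[OF subfield_set.axioms(1)[OF S]]] by blast
qed

theorem proposition2p7:
  fixes phi :: "'k::field poly" and P P' :: "'k set" and q d :: nat
  assumes K: "global_function_field TYPE('k)"
    and q: "q = card (full_constant_field :: 'k set)"
    and d: "d = degree phi"
    and a: "\<forall>x\<in>P. \<forall>y\<in>P. \<forall>x'\<in>P. \<forall>y'\<in>P. x \<noteq> y \<longrightarrow> x' \<noteq> y' \<longrightarrow>
              (\<exists>u\<in>full_constant_field - {0}. y' - x' = u * (y - x))"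
    and b: "P' \<union> (poly phi ` P') \<subseteq> P"
  shows "(finite P \<and> card P \<le> q) \<and>
         ((finite P' \<and> card P' \<le> d) \<or>
          (\<exists>psi. conjugate_over phi psi \<and> (\<forall>i. coeff psi i \<in> full_constant_field)))"
proof -
  have "CHAR('k) > 0"
    using K by (simp add: global_function_field_def prime_gt_0_nat)
  then have F: "subfield_set (full_constant_field :: 'k set)"
    by (rule subfield_set_full_constant_field)
  have proportional: "proportional_differences full_constant_field P"
    using a unfolding proportional_differences_def .
  have P: "finite P \<and> card P \<le> q"
    using card_le_if_proportional_differences[OF proportional subring_set.zero_mem[OF subfield_set.axioms(1)[OF F]]
        finite_full_constant_field[OF K]] q by simp
  then have "finite P'"
    using b finite_subset by blast
  moreover have "\<exists>psi. conjugate_over phi psi \<and> (\<forall>i. coeff psi i \<in> full_constant_field)" if "d < card P'"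
    using conjugate_over_polys_over_if_proportional_differences[OF F proportional b \<open>finite P'\<close>] that d
    unfolding polys_over_def by auto
  ultimately show ?thesis
    using P by fastforce
qed

end
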